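(* Let $q$ be a prime power. (i) Let $C$ be an $[n,k,d]$ linear code over $\mathbb{F}_q$ whose Euclidean hull $C\cap C^{\perp_E}$ has dimension $l$. If $l<d$, then there exists a set $T$ of $l$ coordinate positions such that the punctured code $C^T$ of $C$ on $T$ is a Euclidean LCD $[n-l,k,d^*]$ code with $d^*\ge d-l$. (ii) The same holds for an $[n,k,d]$ linear code over $\mathbb{F}_{q^2}$ whose Hermitian hull $C\cap C^{\perp_H}$ has dimension $l$, with "Euclidean LCD" replaced by "Hermitian LCD".
   Context: An $[n,k,d]$ linear code over a finite field $F$ is a $k$-dimensional subspace of $F^n$ with minimum nonzero Hamming weight $d$. Euclidean inner product on $\mathbb{F}_q^n$: $\langle x,y\rangle_E=\sum x_iy_i$; Hermitian inner product on $\mathbb{F}_{q^2}^n$: $\langle x,y\rangle_H=\sum x_iy_i^q$; $C^{\perp_E},C^{\perp_H}$ are the corresponding duals. The hull of $C$ is $C\cap C^{\perp}$; $C$ is LCD if its hull is $\{0\}$. For a set $T$ of coordinate positions, the punctured code $C^T$ is obtained by deleting the coordinates in $T$ from every codeword of $C$. *)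

theory Defs
  imports Complex_Main "HOL-Library.Function_Algebras"
begin

text \<open>Vectors of length n over a field are functions nat => 'a vanishing outside
  the coordinate set {..<n}.  Punctured codes keep the remaining coordinate set
  (no re-indexing); its length is the cardinality of the coordinate set.\<close>

definition sc :: "'a::field \<Rightarrow> (nat \<Rightarrow> 'a) \<Rightarrow> (nat \<Rightarrow> 'a)" where
  "sc c x = (\<lambda>i. c * x i)"

lemma vector_space_sc: "vector_space (sc :: 'a::field \<Rightarrow> _)"
  by unfold_locales (auto simp: sc_def fun_eq_iff algebra_simps)

definition vecs :: "nat set \<Rightarrow> (nat \<Rightarrow> 'a::zero) set" where
  "vecs I = {x. \<forall>i. i \<notin> I \<longrightarrow> x i = 0}"

definition linear_code :: "nat set \<Rightarrow> (nat \<Rightarrow> 'a::field) set \<Rightarrow> bool" where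
  "linear_code I C \<longleftrightarrow> C \<subseteq> vecs I \<and> module.subspace sc C"

definition cdim :: "(nat \<Rightarrow> 'a::field) set \<Rightarrow> nat" where
  "cdim C = vector_space.dim sc C"

definition wt :: "(nat \<Rightarrow> 'a::zero) \<Rightarrow> nat" where
  "wt x = card {i. x i \<noteq> 0}"

definition min_dist :: "(nat \<Rightarrow> 'a::zero) set \<Rightarrow> nat" where
  "min_dist C = Min {wt x | x. x \<in> C \<and> x \<noteq> 0}"

definition eucl_dual :: "nat set \<Rightarrow> (nat \<Rightarrow> 'a::field) set \<Rightarrow> (nat \<Rightarrow> 'a) set" where
  "eucl_dual I C = {y \<in> vecs I. \<forall>x\<in>C. (\<Sum>i\<in>I. x i * y i) = 0}"

text \<open>Hermitian dual over F_{q^2}: conjugation is y |-> y^q.\<close>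
definition herm_dual :: "nat \<Rightarrow> nat set \<Rightarrow> (nat \<Rightarrow> 'a::field) set \<Rightarrow> (nat \<Rightarrow> 'a) set" where
  "herm_dual q I C = {y \<in> vecs I. \<forall>x\<in>C. (\<Sum>i\<in>I. x i * y i ^ q) = 0}"

definition eucl_hull :: "nat set \<Rightarrow> (nat \<Rightarrow> 'a::field) set \<Rightarrow> (nat \<Rightarrow> 'a) set" where
  "eucl_hull I C = C \<inter> eucl_dual I C"

definition herm_hull :: "nat \<Rightarrow> nat set \<Rightarrow> (nat \<Rightarrow> 'a::field) set \<Rightarrow> (nat \<Rightarrow> 'a) set" where
  "herm_hull q I C = C \<inter> herm_dual q I C"

definition eucl_LCD :: "nat set \<Rightarrow> (nat \<Rightarrow> 'a::field) set \<Rightarrow> bool" where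
  "eucl_LCD I C \<longleftrightarrow> eucl_hull I C = {0}"

definition herm_LCD :: "nat \<Rightarrow> nat set \<Rightarrow> (nat \<Rightarrow> 'a::field) set \<Rightarrow> bool" where
  "herm_LCD q I C \<longleftrightarrow> herm_hull q I C = {0}"

definition puncture :: "nat set \<Rightarrow> (nat \<Rightarrow> 'a::zero) set \<Rightarrow> (nat \<Rightarrow> 'a) set" where
  "puncture T C = (\<lambda>x. \<lambda>i. if i \<in> T then 0 else x i) ` C"

end

theory Submission
  imports Defs "HOL-Computational_Algebra.Primes" "HOL-Algebra.Sylow" "HOL-Algebra.Multiplicative_Group"
begin

text \<open>Let \<open>W\<close> be the span of the hull. A smallest set \<open>T\<close> of coordinates on which the
  restriction to \<open>T\<close> is injective on \<open>W\<close> is an information set: the restriction maps \<open>W\<close> onto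
  all vectors supported on \<open>T\<close>, so \<open>|T| = dim W = l\<close>. As \<open>l < d\<close>, deleting \<open>T\<close> is injective on
  \<open>C\<close>, which keeps the dimension, and costs each weight at most \<open>l\<close>. If the punctured word of
  \<open>y \<in> C\<close> is in the hull of the punctured code, then \<open>y\<close> is orthogonal to \<open>C\<close> off \<open>T\<close>. Since
  \<open>x \<mapsto> x^q\<close> is an involutive automorphism, orthogonality is symmetric, so the hull is
  orthogonal to \<open>y\<close> everywhere and hence on \<open>T\<close>; testing with the words of \<open>W\<close> that restrict
  to unit vectors on \<open>T\<close> shows that \<open>y\<close> vanishes on \<open>T\<close>. Then \<open>y\<close> is in the hull and vanishes on
  an information set of \<open>W\<close>, so \<open>y = 0\<close>. The Euclidean case is the exponent \<open>q = 1\<close>; over a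
  field of order \<open>q\<^sup>2\<close>, \<open>q\<close> is a power of the characteristic, so \<open>x \<mapsto> x^q\<close> is additive.\<close>

section \<open>Finite fields\<close>

definition additive_group :: "'a::ab_group_add monoid" where
  "additive_group = \<lparr>carrier = UNIV, monoid.mult = (+), one = 0\<rparr>"

definition multiplicative_group :: "'a::field monoid" where
  "multiplicative_group = \<lparr>carrier = UNIV - {0}, monoid.mult = (*), one = 1\<rparr>"

lemma group_additive_group: "group (additive_group :: 'a::ab_group_add monoid)"
  unfolding additive_group_def by (rule groupI) (auto simp: add.assoc intro: exI[of _ "- _"])

lemma group_multiplicative_group: "group (multiplicative_group :: 'a::field monoid)"
proof (rule groupI)
  fix x :: 'a
  assume "x \<in> carrier multiplicative_group"
  then show "\<exists>y \<in> carrier multiplicative_group.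
      y \<otimes>\<^bsub>multiplicative_group\<^esub> x = \<one>\<^bsub>multiplicative_group\<^esub>"
    by (intro bexI[of _ "inverse x"]) (auto simp: multiplicative_group_def)
qed (auto simp: multiplicative_group_def mult.assoc)

lemma additive_group_pow:
  "x [^]\<^bsub>additive_group\<lparr>carrier := H\<rparr>\<^esub> n = of_nat n * (x :: 'a::ring_1)"
  by (induction n) (simp_all add: additive_group_def algebra_simps)

lemma multiplicative_group_pow:
  "x [^]\<^bsub>multiplicative_group\<^esub> n = (x :: 'a::field) ^ n"
  by (induction n) (simp_all add: multiplicative_group_def mult.commute)

lemma finite_field_power_card_eq_self:
  "(x :: 'a::{finite,field}) ^ card (UNIV :: 'a set) = x"
proof (cases "x = 0")
  case False
  have "order (multiplicative_group :: 'a monoid) = card (UNIV :: 'a set) - 1"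
    by (simp add: order_def multiplicative_group_def card_Diff_singleton)
  then have "x ^ (card (UNIV :: 'a set) - 1) = 1"
    using group.pow_order_eq_1[OF group_multiplicative_group, of x] False
    by (simp add: multiplicative_group_pow) (simp add: multiplicative_group_def)
  moreover have "card (UNIV :: 'a set) = Suc (card (UNIV :: 'a set) - 1)"
    by (simp add: finite_UNIV_card_ge_0)
  ultimately show ?thesis
    by (metis power_Suc mult.right_neutral)
qed (simp add: finite_UNIV_card_ge_0)

text \<open>By Sylow's theorem the additive group has a subgroup of order \<open>r\<close>; a nonzero element \<open>x\<close> of
  it satisfies \<open>r x = 0\<close>, so \<open>r = 0\<close> in the field.\<close>

lemma prime_dvd_card_eq_CHAR:
  assumes "prime r" and "r dvd card (UNIV :: 'a::{finite,field} set)"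
  shows "r = CHAR('a)"
proof -
  let ?G = "additive_group :: 'a monoid"
  have "order ?G = r ^ 1 * (card (UNIV :: 'a set) div r)"
    using assms(2) by (simp add: order_def additive_group_def)
  from sylow_thm[OF assms(1) group_additive_group this]
  obtain H where H: "subgroup H ?G" "card H = r"
    by auto
  have "\<not> H \<subseteq> {0}"
  proof
    assume "H \<subseteq> {0}"
    then have "card H \<le> 1"
      using card_mono[of "{0}" H] by simp
    then show False
      using H(2) prime_gt_1_nat[OF assms(1)] by simp
  qed
  then obtain x where x: "x \<in> H" "x \<noteq> 0"
    by blast
  have "x [^]\<^bsub>?G\<lparr>carrier := H\<rparr>\<^esub> order (?G\<lparr>carrier := H\<rparr>) = \<one>\<^bsub>?G\<lparr>carrier := H\<rparr>\<^esub>"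
    using group.pow_order_eq_1[OF subgroup.subgroup_is_group[OF H(1) group_additive_group]] x(1)
    by simp
  then have "of_nat r * x = 0"
    using H(2) by (simp add: order_def additive_group_pow) (simp add: additive_group_def)
  then have "CHAR('a) dvd r"
    using x(2) by (simp add: of_nat_eq_0_iff_char_dvd)
  moreover have "CHAR('a) \<noteq> 1"
    by simp
  ultimately show ?thesis
    using assms(1) by (auto simp: prime_nat_iff)
qed

lemma prime_CHAR_finite: "prime CHAR('a::{finite,field})"
  by (rule prime_CHAR_semidom) (simp add: finite_imp_CHAR_pos)

lemma dvd_card_imp_CHAR_power:
  fixes q :: nat
  assumes "q dvd card (UNIV :: 'a::{finite,field} set)" and "q > 0"
  obtains k where "q = CHAR('a) ^ k"
proof -
  have "r = CHAR('a)" if "r \<in> prime_factors q" for r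
    using that assms(1) by (auto intro: prime_dvd_card_eq_CHAR dvd_trans)
  then show ?thesis
    using Ex_other_prime_factor[OF _ _ prime_CHAR_finite, of q] assms(2) that by auto
qed

lemma frobenius_of_card_eq_square:
  fixes q :: nat and a b :: "'a::{finite,field}"
  assumes card: "card (UNIV :: 'a set) = q ^ 2"
  shows "(a + b) ^ q = a ^ q + b ^ q" and "(a ^ q) ^ q = a"
proof -
  have "q > 0"
    using card finite_UNIV_card_ge_0[where ?'a = 'a] by (cases q) auto
  moreover have "q dvd card (UNIV :: 'a set)"
    using card by (simp add: power2_eq_square)
  ultimately obtain k where "q = CHAR('a) ^ k"
    using dvd_card_imp_CHAR_power by blast
  then show "(a + b) ^ q = a ^ q + b ^ q"
    by (rule freshmans_dream'[OF prime_CHAR_finite])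
  show "(a ^ q) ^ q = a"
    using finite_field_power_card_eq_self[of a] card by (simp flip: power_mult power2_eq_square)
qed

section \<open>Coordinate projections and information sets\<close>

interpretation V: vector_space "sc :: 'a::field \<Rightarrow> (nat \<Rightarrow> 'a) \<Rightarrow> nat \<Rightarrow> 'a"
  by (rule vector_space_sc)

lemma sc_apply: "sc c x i = c * x i"
  by (simp add: sc_def)

definition coord_proj :: "nat set \<Rightarrow> (nat \<Rightarrow> 'a::zero) \<Rightarrow> nat \<Rightarrow> 'a" where
  "coord_proj T x = (\<lambda>i. if i \<in> T then x i else 0)"

definition unit_vec :: "nat \<Rightarrow> nat \<Rightarrow> 'a::zero_neq_one" where
  "unit_vec j = (\<lambda>i. if i = j then 1 else 0)"

definition information_set :: "nat set \<Rightarrow> (nat \<Rightarrow> 'a::field) set \<Rightarrow> bool" where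
  "information_set T W \<longleftrightarrow> bij_betw (coord_proj T) W (vecs T)"

lemma linear_coord_proj: "Vector_Spaces.linear sc sc (coord_proj T :: (nat \<Rightarrow> 'a::field) \<Rightarrow> _)"
  by (auto simp: Vector_Spaces.linear_iff vector_space_sc coord_proj_def sc_apply fun_eq_iff)

lemma coord_proj_zero [simp]: "coord_proj T 0 = 0"
  by (simp add: coord_proj_def fun_eq_iff)

lemma coord_proj_vecs: "x \<in> vecs T \<Longrightarrow> coord_proj T x = x"
  by (auto simp: coord_proj_def vecs_def fun_eq_iff)

lemma puncture_eq_image: "puncture T C = coord_proj (- T) ` C"
  unfolding puncture_def coord_proj_def by (intro image_cong) auto

lemma dim_image_eq_of_inj_on:
  fixes f :: "(nat \<Rightarrow> 'a::field) \<Rightarrow> nat \<Rightarrow> 'a"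
  assumes "Vector_Spaces.linear sc sc f" and "V.subspace S" and "inj_on f S"
  shows "V.dim (f ` S) = V.dim S"
proof -
  interpret f: Vector_Spaces.linear sc sc f by fact
  obtain B where B: "B \<subseteq> S" "V.independent B" "S \<subseteq> V.span B" "card B = V.dim S"
    using V.basis_exists by blast
  have span_B: "V.span B = S"
    using B(1,3) assms(2) by (rule V.span_subspace)
  then have "V.independent (f ` B)"
    using B(2) assms(3) by (simp add: f.independent_injective_image)
  moreover have "f ` S = V.span (f ` B)"
    by (simp add: f.span_image span_B)
  moreover have "card (f ` B) = card B"
    using B(1) assms(3) by (auto intro: card_image inj_on_subset)
  ultimately show ?thesis
    using B(4) by (simp add: V.dim_eq_card_independent)
qed

lemma independent_unit_vecs: "V.independent (unit_vec ` T :: (nat \<Rightarrow> 'a::field) set)"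
proof
  assume "V.dependent (unit_vec ` T :: (nat \<Rightarrow> 'a) set)"
  then obtain j where j: "j \<in> T" "unit_vec j \<in> V.span (unit_vec ` T - {unit_vec j :: nat \<Rightarrow> 'a})"
    unfolding V.dependent_def by blast
  have "unit_vec ` T - {unit_vec j} \<subseteq> {v :: nat \<Rightarrow> 'a. v j = 0}"
    by (auto simp: unit_vec_def)
  moreover have "V.subspace {v :: nat \<Rightarrow> 'a. v j = 0}"
    by (auto simp: V.subspace_def sc_apply)
  ultimately have "(unit_vec j :: nat \<Rightarrow> 'a) j = 0"
    using j(2) V.span_minimal by blast
  then show False
    by (simp add: unit_vec_def)
qed

lemma vecs_subset_span_unit_vecs:
  "finite T \<Longrightarrow> vecs T \<subseteq> V.span (unit_vec ` T :: (nat \<Rightarrow> 'a::field) set)"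
proof (induction T rule: finite_induct)
  case empty
  have "vecs {} = {0}"
    by (auto simp: vecs_def fun_eq_iff)
  then show ?case
    using V.span_zero by auto
next
  case (insert j T)
  show ?case
  proof
    fix v :: "nat \<Rightarrow> 'a"
    assume v: "v \<in> vecs (insert j T)"
    have "v - sc (v j) (unit_vec j) \<in> vecs T"
      using v by (auto simp: vecs_def unit_vec_def sc_apply)
    then have "v - sc (v j) (unit_vec j) \<in> V.span (unit_vec ` insert j T)"
      using insert.IH V.span_mono[of "unit_vec ` T" "unit_vec ` insert j T"] by blast
    moreover have "sc (v j) (unit_vec j) \<in> V.span (unit_vec ` insert j T)"
      by (intro V.span_scale V.span_base) auto
    ultimately show "v \<in> V.span (unit_vec ` insert j T)"
      using V.span_add by fastforce
  qed
qed

lemma dim_vecs: "finite T \<Longrightarrow> V.dim (vecs T :: (nat \<Rightarrow> 'a::field) set) = card T"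
proof -
  assume "finite T"
  have "inj (unit_vec :: nat \<Rightarrow> nat \<Rightarrow> 'a)"
    by (rule injI) (metis unit_vec_def zero_neq_one)
  then have "card (unit_vec ` T :: (nat \<Rightarrow> 'a) set) = card T"
    by (simp add: card_image inj_on_subset)
  moreover have "unit_vec ` T \<subseteq> (vecs T :: (nat \<Rightarrow> 'a) set)"
    by (auto simp: vecs_def unit_vec_def)
  ultimately show ?thesis
    using V.basis_card_eq_dim vecs_subset_span_unit_vecs[OF \<open>finite T\<close>] independent_unit_vecs
    by metis
qed

lemma card_information_set:
  assumes "finite T" and "V.subspace W" and "information_set T W"
  shows "card T = V.dim W"
proof -
  have inj: "inj_on (coord_proj T) W" and onto: "coord_proj T ` W = vecs T"
    using assms(3) by (auto simp: information_set_def bij_betw_def)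
  have "V.dim W = V.dim (coord_proj T ` W)"
    using dim_image_eq_of_inj_on[OF linear_coord_proj assms(2) inj] by simp
  also have "\<dots> = card T"
    using assms(1) by (simp add: onto dim_vecs)
  finally show ?thesis ..
qed

text \<open>If dropping \<open>j\<close> from \<open>T\<close> destroys injectivity, a kernel vector of the smaller projection,
  rescaled, is a vector of \<open>W\<close> whose restriction to \<open>T\<close> is the \<open>j\<close>-th unit vector.\<close>

lemma unit_vec_in_coord_proj_image:
  fixes W :: "(nat \<Rightarrow> 'a::field) set"
  assumes W: "V.subspace W" and inj: "inj_on (coord_proj T) W"
    and not_inj: "\<not> inj_on (coord_proj (T - {j})) W" and "j \<in> T"
  shows "unit_vec j \<in> coord_proj T ` W"
proof -
  interpret proj: Vector_Spaces.linear sc sc "coord_proj (T - {j}) :: (nat \<Rightarrow> 'a) \<Rightarrow> _"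
    by (rule linear_coord_proj)
  obtain w where w: "w \<in> W" "w \<noteq> 0" "coord_proj (T - {j}) w = 0"
    using not_inj proj.inj_on_iff_eq_0[OF W] by blast
  have "coord_proj T w \<noteq> 0"
    using inj w(1,2) V.subspace_0[OF W] by (metis coord_proj_zero inj_onD)
  then have wj: "w j \<noteq> 0"
    using w(3) by (auto simp: coord_proj_def fun_eq_iff split: if_splits)
  have "coord_proj T (sc (inverse (w j)) w) = unit_vec j"
    using w(3) wj \<open>j \<in> T\<close> by (auto simp: coord_proj_def unit_vec_def sc_apply fun_eq_iff split: if_splits)
  moreover have "sc (inverse (w j)) w \<in> W"
    using W w(1) by (rule V.subspace_scale)
  ultimately show ?thesis
    by (metis image_eqI)
qed

lemma exists_information_set:
  fixes W :: "(nat \<Rightarrow> 'a::field) set"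
  assumes "finite I" and W: "V.subspace W" and "W \<subseteq> vecs I"
  obtains T where "T \<subseteq> I" and "information_set T W"
proof -
  define P where "P T \<longleftrightarrow> T \<subseteq> I \<and> inj_on (coord_proj T) W" for T
  have "inj_on (coord_proj I) W"
    using assms(3) by (intro inj_onI) (metis coord_proj_vecs subsetD)
  then have "P I"
    by (simp add: P_def)
  then obtain T where T: "P T" and T_min: "\<And>T'. P T' \<Longrightarrow> card T \<le> card T'"
    using ex_has_least_nat[of P I card] by blast
  have "T \<subseteq> I" and inj: "inj_on (coord_proj T) W"
    using T by (auto simp: P_def)
  have fin_T: "finite T"
    using \<open>T \<subseteq> I\<close> assms(1) by (rule finite_subset)
  interpret proj: Vector_Spaces.linear sc sc "coord_proj T :: (nat \<Rightarrow> 'a) \<Rightarrow> _"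
    by (rule linear_coord_proj)
  have "unit_vec j \<in> coord_proj T ` W" if "j \<in> T" for j
  proof (rule unit_vec_in_coord_proj_image[OF W inj _ that])
    show "\<not> inj_on (coord_proj (T - {j})) W"
      using T_min[of "T - {j}"] card_Diff1_less[OF fin_T that] \<open>T \<subseteq> I\<close> by (auto simp: P_def)
  qed
  then have "V.span (unit_vec ` T) \<subseteq> coord_proj T ` W"
    by (intro V.span_minimal proj.subspace_image[OF W]) auto
  then have "vecs T \<subseteq> coord_proj T ` W"
    using vecs_subset_span_unit_vecs[OF fin_T] by blast
  moreover have "coord_proj T ` W \<subseteq> vecs T"
    by (auto simp: coord_proj_def vecs_def)
  ultimately have "information_set T W"
    using inj by (simp add: information_set_def bij_betw_def)
  with \<open>T \<subseteq> I\<close> show ?thesis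
    by (rule that)
qed

section \<open>Weights and puncturing\<close>

lemma support_subset_vecs: "x \<in> vecs I \<Longrightarrow> {i. x i \<noteq> 0} \<subseteq> I"
  by (auto simp: vecs_def)

lemma wt_le_card: "x \<in> vecs I \<Longrightarrow> finite I \<Longrightarrow> wt x \<le> card I"
  unfolding wt_def by (intro card_mono support_subset_vecs)

lemma min_dist_le_wt:
  assumes "C \<subseteq> vecs I" and "finite I" and "x \<in> C" and "x \<noteq> 0"
  shows "min_dist C \<le> wt x"
proof -
  have "{wt x |x. x \<in> C \<and> x \<noteq> 0} \<subseteq> {..card I}"
    using assms(1,2) by (auto intro: wt_le_card)
  then have "finite {wt x |x. x \<in> C \<and> x \<noteq> 0}"
    by (rule finite_subset) simp
  then show ?thesis
    unfolding min_dist_def using assms(3,4) by (intro Min_le) auto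
qed

lemma wt_le_wt_coord_proj:
  assumes "finite {i. x i \<noteq> 0}" and "finite T"
  shows "wt x \<le> wt (coord_proj (- T) x) + card T"
proof -
  have "{i. coord_proj (- T) x i \<noteq> 0} \<subseteq> {i. x i \<noteq> 0}"
    by (auto simp: coord_proj_def)
  then have "finite ({i. coord_proj (- T) x i \<noteq> 0} \<union> T)"
    using assms finite_subset by blast
  moreover have "{i. x i \<noteq> 0} \<subseteq> {i. coord_proj (- T) x i \<noteq> 0} \<union> T"
    by (auto simp: coord_proj_def)
  ultimately have "wt x \<le> card ({i. coord_proj (- T) x i \<noteq> 0} \<union> T)"
    unfolding wt_def by (rule card_mono)
  also have "\<dots> \<le> wt (coord_proj (- T) x) + card T"
    unfolding wt_def by (rule card_Un_le)
  finally show ?thesis .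
qed

lemma linear_code_puncture:
  assumes "linear_code I C"
  shows "linear_code (I - T) (puncture T C)"
proof -
  interpret proj: Vector_Spaces.linear sc sc "coord_proj (- T) :: (nat \<Rightarrow> 'a) \<Rightarrow> _"
    by (rule linear_coord_proj)
  have C: "C \<subseteq> vecs I" "V.subspace C"
    using assms by (auto simp: linear_code_def)
  then have "coord_proj (- T) ` C \<subseteq> vecs (I - T)"
    by (auto simp: vecs_def coord_proj_def)
  moreover have "V.subspace (coord_proj (- T) ` C)"
    by (rule proj.subspace_image[OF C(2)])
  ultimately show ?thesis
    by (simp add: linear_code_def puncture_eq_image)
qed

lemma inj_on_puncture:
  assumes code: "linear_code I C" and "finite I" "finite T" and small: "card T < min_dist C"
  shows "inj_on (coord_proj (- T)) C"
proof -
  interpret proj: Vector_Spaces.linear sc sc "coord_proj (- T) :: (nat \<Rightarrow> 'a) \<Rightarrow> _"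
    by (rule linear_coord_proj)
  have C_vecs: "C \<subseteq> vecs I"
    using code by (simp add: linear_code_def)
  have "x = 0" if "x \<in> C" and proj_x: "coord_proj (- T) x = 0" for x
  proof (rule ccontr)
    assume "x \<noteq> 0"
    have "x i = 0" if "i \<notin> T" for i
      using fun_cong[OF proj_x, of i] that by (simp add: coord_proj_def)
    then have "{i. x i \<noteq> 0} \<subseteq> T"
      by blast
    with \<open>finite T\<close> have "wt x \<le> card T"
      unfolding wt_def by (rule card_mono)
    moreover have "min_dist C \<le> wt x"
      by (rule min_dist_le_wt[OF C_vecs \<open>finite I\<close> \<open>x \<in> C\<close> \<open>x \<noteq> 0\<close>])
    ultimately show False
      using small by simp
  qed
  moreover have "V.subspace C"
    using code by (simp add: linear_code_def)
  ultimately show ?thesis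
    using proj.inj_on_iff_eq_0 by blast
qed

lemma min_dist_puncture_ge:
  assumes code: "linear_code I C" and "finite I" "finite T"
    and inj: "inj_on (coord_proj (- T)) C"
  shows "min_dist C - card T \<le> min_dist (puncture T C)"
proof -
  have "0 \<in> C"
    using code by (auto simp: linear_code_def V.subspace_0)
  then have nonzero: "coord_proj (- T) x \<noteq> 0" if "x \<in> C" "x \<noteq> 0" for x
    using inj_onD[OF inj] that by fastforce
  have weights: "{wt y |y. y \<in> puncture T C \<and> y \<noteq> 0} =
      (\<lambda>x. wt (coord_proj (- T) x)) ` {x \<in> C. x \<noteq> 0}"
  proof (intro equalityI subsetI)
    fix w
    assume "w \<in> {wt y |y. y \<in> puncture T C \<and> y \<noteq> 0}"
    then obtain x where "x \<in> C" "coord_proj (- T) x \<noteq> 0" "w = wt (coord_proj (- T) x)"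
      by (auto simp: puncture_eq_image)
    then show "w \<in> (\<lambda>x. wt (coord_proj (- T) x)) ` {x \<in> C. x \<noteq> 0}"
      by (intro image_eqI[of _ _ x]) auto
  next
    fix w
    assume "w \<in> (\<lambda>x. wt (coord_proj (- T) x)) ` {x \<in> C. x \<noteq> 0}"
    then obtain x where "x \<in> C" "x \<noteq> 0" "w = wt (coord_proj (- T) x)"
      by auto
    then show "w \<in> {wt y |y. y \<in> puncture T C \<and> y \<noteq> 0}"
      using nonzero by (auto simp: puncture_eq_image intro!: exI[of _ "coord_proj (- T) x"])
  qed
  show ?thesis
  proof (cases "{x \<in> C. x \<noteq> 0} = {}")
    case True
    moreover have "{wt x |x. x \<in> C \<and> x \<noteq> 0} = {}"
      using True by auto
    ultimately have "min_dist (puncture T C) = min_dist C"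
      unfolding min_dist_def weights by (metis image_empty)
    then show ?thesis
      by simp
  next
    case False
    have C_vecs: "C \<subseteq> vecs I"
      using code by (simp add: linear_code_def)
    have lower: "min_dist C - card T \<le> wt (coord_proj (- T) x)" if "x \<in> C" "x \<noteq> 0" for x
    proof -
      have "finite {i. x i \<noteq> 0}"
        using support_subset_vecs[OF subsetD[OF C_vecs that(1)]] \<open>finite I\<close> by (rule finite_subset)
      then show ?thesis
        using min_dist_le_wt[OF C_vecs \<open>finite I\<close> that] wt_le_wt_coord_proj[of x T] \<open>finite T\<close>
        by simp
    qed
    have proj_vecs: "coord_proj (- T) x \<in> vecs I" if "x \<in> C" for x
      using C_vecs that by (auto simp: vecs_def coord_proj_def)
    have "(\<lambda>x. wt (coord_proj (- T) x)) ` {x \<in> C. x \<noteq> 0} \<subseteq> {..card I}"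
      by (auto intro: wt_le_card[OF proj_vecs \<open>finite I\<close>])
    then have "finite ((\<lambda>x. wt (coord_proj (- T) x)) ` {x \<in> C. x \<noteq> 0})"
      by (rule finite_subset) simp
    moreover have "min_dist (puncture T C) = Min ((\<lambda>x. wt (coord_proj (- T) x)) ` {x \<in> C. x \<noteq> 0})"
      by (simp add: min_dist_def weights)
    ultimately show ?thesis
      using False lower by simp
  qed
qed

section \<open>Hermitian hulls of punctured codes\<close>

lemma exponent_pos_if_power_power_eq:
  assumes "\<And>a::'a::field. (a ^ q) ^ q = a"
  shows "q > 0"
  using assms[of 0] by (cases q) auto

lemma herm_orthogonal_sym:
  fixes x y :: "nat \<Rightarrow> 'a::field"
  assumes power_add: "\<And>a b::'a. (a + b) ^ q = a ^ q + b ^ q"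
    and power_power: "\<And>a::'a. (a ^ q) ^ q = a"
    and orth: "(\<Sum>i\<in>I. x i * y i ^ q) = 0"
  shows "(\<Sum>i\<in>I. y i * x i ^ q) = 0"
proof -
  have "q > 0"
    using power_power by (rule exponent_pos_if_power_power_eq)
  have "(\<Sum>i\<in>I. x i * y i ^ q) ^ q = (\<Sum>i\<in>I. (x i * y i ^ q) ^ q)"
    by (induction I rule: infinite_finite_induct) (use power_add \<open>q > 0\<close> in auto)
  also have "\<dots> = (\<Sum>i\<in>I. y i * x i ^ q)"
    by (simp add: power_mult_distrib power_power mult.commute)
  finally show ?thesis
    using orth \<open>q > 0\<close> by (simp add: zero_power)
qed

lemma subspace_orthogonal: "V.subspace {w :: nat \<Rightarrow> 'a::field. (\<Sum>i\<in>T. w i * z i) = 0}"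
  unfolding V.subspace_def
  by (simp add: sc_apply sum.distrib distrib_right mult.assoc flip: sum_distrib_left)

lemma vanishes_on_information_set:
  assumes info: "information_set T W" and "finite T" and "j \<in> T"
    and orth: "\<And>w. w \<in> W \<Longrightarrow> (\<Sum>i\<in>T. w i * z i) = 0"
  shows "z j = 0"
proof -
  have "unit_vec j \<in> vecs T"
    using \<open>j \<in> T\<close> by (simp add: vecs_def unit_vec_def)
  then have "unit_vec j \<in> coord_proj T ` W"
    using info by (simp add: information_set_def bij_betw_def)
  then obtain u where u: "unit_vec j = coord_proj T u" "u \<in> W" ..
  have "(\<Sum>i\<in>T. u i * z i) = (\<Sum>i\<in>T. unit_vec j i * z i)"
    by (rule sum.cong) (use fun_cong[OF u(1)] in \<open>auto simp: coord_proj_def\<close>)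
  also have "\<dots> = (\<Sum>i\<in>T. if i = j then z i else 0)"
    by (rule sum.cong) (auto simp: unit_vec_def)
  also have "\<dots> = z j"
    using \<open>finite T\<close> \<open>j \<in> T\<close> by simp
  finally show ?thesis
    using orth[OF u(2)] by simp
qed

lemma vanishes_on_information_set_of_hull:
  fixes C :: "(nat \<Rightarrow> 'a::field) set"
  assumes power_add: "\<And>a b::'a. (a + b) ^ q = a ^ q + b ^ q"
    and power_power: "\<And>a::'a. (a ^ q) ^ q = a"
    and "finite I" "T \<subseteq> I" and info: "information_set T (V.span (herm_hull q I C))"
    and "y \<in> C" and orth_off_T: "\<And>x. x \<in> C \<Longrightarrow> (\<Sum>i\<in>I - T. x i * y i ^ q) = 0"
    and "j \<in> T"
  shows "y j = 0"
proof -
  have "finite T"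
    using \<open>finite I\<close> \<open>T \<subseteq> I\<close> by (rule finite_subset[rotated])
  have on_T: "(\<Sum>i\<in>T. h i * y i ^ q) = 0" if "h \<in> herm_hull q I C" for h
  proof -
    have "(\<Sum>i\<in>I. y i * h i ^ q) = 0"
      using that \<open>y \<in> C\<close> by (auto simp: herm_hull_def herm_dual_def)
    then have "(\<Sum>i\<in>I. h i * y i ^ q) = 0"
      by (rule herm_orthogonal_sym[OF power_add power_power])
    moreover have "(\<Sum>i\<in>I - T. h i * y i ^ q) = 0"
      using that by (auto simp: herm_hull_def intro: orth_off_T)
    ultimately show ?thesis
      using sum.subset_diff[OF \<open>T \<subseteq> I\<close> \<open>finite I\<close>, of "\<lambda>i. h i * y i ^ q"] by simp
  qed
  have "V.span (herm_hull q I C) \<subseteq> {w. (\<Sum>i\<in>T. w i * y i ^ q) = 0}"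
    using on_T by (intro V.span_minimal subspace_orthogonal) auto
  then have "y j ^ q = 0"
    using vanishes_on_information_set[OF info \<open>finite T\<close> \<open>j \<in> T\<close>, of "\<lambda>i. y i ^ q"] by blast
  then show ?thesis
    by simp
qed

lemma herm_LCD_puncture:
  fixes C :: "(nat \<Rightarrow> 'a::field) set"
  assumes power_add: "\<And>a b::'a. (a + b) ^ q = a ^ q + b ^ q"
    and power_power: "\<And>a::'a. (a ^ q) ^ q = a"
    and code: "linear_code I C" and "finite I" "T \<subseteq> I"
    and info: "information_set T (V.span (herm_hull q I C))"
  shows "herm_LCD q (I - T) (puncture T C)"
proof -
  have "q > 0"
    using power_power by (rule exponent_pos_if_power_power_eq)
  have C: "C \<subseteq> vecs I" "V.subspace C"
    using code by (auto simp: linear_code_def)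
  have only_zero: "y = 0" if "y \<in> C" and "coord_proj (- T) y \<in> herm_dual q (I - T) (puncture T C)" for y
  proof -
    have orth_off_T: "(\<Sum>i\<in>I - T. x i * y i ^ q) = 0" if "x \<in> C" for x
    proof -
      have "(\<Sum>i\<in>I - T. coord_proj (- T) x i * coord_proj (- T) y i ^ q) = 0"
        using \<open>coord_proj (- T) y \<in> _\<close> \<open>x \<in> C\<close> by (auto simp: herm_dual_def puncture_eq_image)
      then show ?thesis
        by (simp add: coord_proj_def)
    qed
    have y_T: "y j = 0" if "j \<in> T" for j
      using vanishes_on_information_set_of_hull[OF power_add power_power assms(4,5) info \<open>y \<in> C\<close>
          orth_off_T that] .
    have "(\<Sum>i\<in>I. x i * y i ^ q) = 0" if "x \<in> C" for x
      using sum.subset_diff[OF \<open>T \<subseteq> I\<close> \<open>finite I\<close>, of "\<lambda>i. x i * y i ^ q"]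
        orth_off_T[OF that] y_T \<open>q > 0\<close> by (simp add: zero_power)
    then have "y \<in> V.span (herm_hull q I C)"
      using C(1) \<open>y \<in> C\<close> by (auto simp: herm_hull_def herm_dual_def intro: V.span_base)
    moreover have "coord_proj T y = coord_proj T 0"
      using y_T by (auto simp: coord_proj_def fun_eq_iff)
    moreover have "inj_on (coord_proj T) (V.span (herm_hull q I C))"
      using info by (simp add: information_set_def bij_betw_def)
    ultimately show "y = 0"
      using V.span_zero by (blast dest: inj_onD)
  qed
  have "herm_hull q (I - T) (puncture T C) \<subseteq> {0}"
  proof
    fix y'
    assume "y' \<in> herm_hull q (I - T) (puncture T C)"
    then obtain y where "y \<in> C" "y' = coord_proj (- T) y"
        "coord_proj (- T) y \<in> herm_dual q (I - T) (puncture T C)"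
      by (auto simp: herm_hull_def puncture_eq_image)
    then show "y' \<in> {0}"
      using only_zero[of y] by simp
  qed
  moreover have "0 \<in> puncture T C"
    using V.subspace_0[OF C(2)] by (force simp: puncture_eq_image)
  then have "0 \<in> herm_hull q (I - T) (puncture T C)"
    using \<open>q > 0\<close> by (simp add: herm_hull_def herm_dual_def vecs_def zero_power)
  ultimately show ?thesis
    by (auto simp: herm_LCD_def)
qed

lemma exists_herm_LCD_puncture:
  fixes C :: "(nat \<Rightarrow> 'a::field) set"
  assumes power_add: "\<And>a b::'a. (a + b) ^ q = a ^ q + b ^ q"
    and power_power: "\<And>a::'a. (a ^ q) ^ q = a"
    and code: "linear_code {..<n} C" and hull_dim: "cdim (herm_hull q {..<n} C) = l"
    and small: "l < min_dist C"
  shows "\<exists>T. T \<subseteq> {..<n} \<and> card T = l \<and>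
          linear_code ({..<n} - T) (puncture T C) \<and>
          card ({..<n} - T) = n - l \<and>
          herm_LCD q ({..<n} - T) (puncture T C) \<and>
          cdim (puncture T C) = cdim C \<and>
          min_dist (puncture T C) \<ge> min_dist C - l"
proof -
  let ?W = "V.span (herm_hull q {..<n} C)"
  have C: "C \<subseteq> vecs {..<n}" "V.subspace C"
    using code by (auto simp: linear_code_def)
  then have "?W \<subseteq> vecs {..<n}"
    using V.span_minimal[of "herm_hull q {..<n} C" C] by (auto simp: herm_hull_def)
  then obtain T where T: "T \<subseteq> {..<n}" and info: "information_set T ?W"
    using exists_information_set[of "{..<n}" ?W] by blast
  have "finite T"
    using T finite_subset by blast
  have card_T: "card T = l"
    using card_information_set[OF \<open>finite T\<close> V.subspace_span info] hull_dim by (simp add: cdim_def)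
  have inj: "inj_on (coord_proj (- T)) C"
    using inj_on_puncture[OF code _ \<open>finite T\<close>] small card_T by simp
  have "cdim (puncture T C) = cdim C"
    unfolding cdim_def puncture_eq_image by (rule dim_image_eq_of_inj_on[OF linear_coord_proj C(2) inj])
  moreover have "card ({..<n} - T) = n - l"
    using card_Diff_subset[OF \<open>finite T\<close> T] card_T by simp
  moreover have "min_dist (puncture T C) \<ge> min_dist C - l"
    using min_dist_puncture_ge[OF code _ \<open>finite T\<close> inj] card_T by simp
  ultimately show ?thesis
    using T card_T linear_code_puncture[OF code] herm_LCD_puncture[OF power_add power_power code _ T info]
    by auto
qed

lemma eucl_hull_eq_herm_hull_1: "eucl_hull I C = herm_hull 1 I C"
  by (simp add: eucl_hull_def herm_hull_def eucl_dual_def herm_dual_def)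

lemma eucl_LCD_iff_herm_LCD_1: "eucl_LCD I C \<longleftrightarrow> herm_LCD 1 I C"
  by (simp add: eucl_LCD_def herm_LCD_def eucl_hull_eq_herm_hull_1)

theorem theorem3p3:
  shows
  "(\<forall>(n::nat) (k::nat) (d::nat) (l::nat) (C :: (nat \<Rightarrow> 'a::{finite,field}) set).
      linear_code {..<n} C \<and> cdim C = k \<and> min_dist C = d \<and>
      cdim (eucl_hull {..<n} C) = l \<and> l < d \<longrightarrow>
      (\<exists>T. T \<subseteq> {..<n} \<and> card T = l \<and>
          linear_code ({..<n} - T) (puncture T C) \<and>
          card ({..<n} - T) = n - l \<and>
          eucl_LCD ({..<n} - T) (puncture T C) \<and>
          cdim (puncture T C) = k \<and>
          min_dist (puncture T C) \<ge> d - l))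
   \<and>
   (\<forall>(q::nat) (n::nat) (k::nat) (d::nat) (l::nat) (C :: (nat \<Rightarrow> 'b::{finite,field}) set).
      card (UNIV :: 'b set) = q ^ 2 \<and>
      linear_code {..<n} C \<and> cdim C = k \<and> min_dist C = d \<and>
      cdim (herm_hull q {..<n} C) = l \<and> l < d \<longrightarrow>
      (\<exists>T. T \<subseteq> {..<n} \<and> card T = l \<and>
          linear_code ({..<n} - T) (puncture T C) \<and>
          card ({..<n} - T) = n - l \<and>
          herm_LCD q ({..<n} - T) (puncture T C) \<and>
          cdim (puncture T C) = k \<and>
          min_dist (puncture T C) \<ge> d - l))"
proof (intro conjI allI impI)
  fix n k d l :: nat and C :: "(nat \<Rightarrow> 'a::{finite,field}) set"
  assume "linear_code {..<n} C \<and> cdim C = k \<and> min_dist C = d \<and>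
      cdim (eucl_hull {..<n} C) = l \<and> l < d"
  then show "\<exists>T. T \<subseteq> {..<n} \<and> card T = l \<and>
          linear_code ({..<n} - T) (puncture T C) \<and>
          card ({..<n} - T) = n - l \<and>
          eucl_LCD ({..<n} - T) (puncture T C) \<and>
          cdim (puncture T C) = k \<and>
          min_dist (puncture T C) \<ge> d - l"
    using exists_herm_LCD_puncture[of 1 n C l]
    by (simp add: eucl_hull_eq_herm_hull_1 eucl_LCD_iff_herm_LCD_1)
next
  fix q n k d l :: nat and C :: "(nat \<Rightarrow> 'b::{finite,field}) set"
  assume assms: "card (UNIV :: 'b set) = q ^ 2 \<and>
      linear_code {..<n} C \<and> cdim C = k \<and> min_dist C = d \<and>
      cdim (herm_hull q {..<n} C) = l \<and> l < d"
  then show "\<exists>T. T \<subseteq> {..<n} \<and> card T = l \<and>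
          linear_code ({..<n} - T) (puncture T C) \<and>
          card ({..<n} - T) = n - l \<and>
          herm_LCD q ({..<n} - T) (puncture T C) \<and>
          cdim (puncture T C) = k \<and>
          min_dist (puncture T C) \<ge> d - l"
    using exists_herm_LCD_puncture[of q n C l] frobenius_of_card_eq_square[of q] by auto
qed

end
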